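(* Let $P\subset\mathbb{R}^d$ be a finite point set satisfying the standing condition, let $\varepsilon\in(0,1)$, let $X$ be the set of extreme points of $P$, let $Q^*_\varepsilon$ be an optimal solution of GRMR (a minimum-cardinality $\varepsilon$-regret set of $P$), and let $Q_\varepsilon$ be the solution returned by the algorithm H-GRMR described in the context. Then $|Q_\varepsilon|\le\frac{|X|}{d+1}\cdot|Q^*_\varepsilon|$.
   Context: For finite $Q\subset\mathbb{R}^d$ and unit $x$, $\omega(x,Q)=\max_{p\in Q}\langle p,x\rangle$. Standing condition: $\omega(x,P)>0$ for all $x\in\mathbb{S}^{d-1}$. Regret ratio $l_x(Q)=1-\omega(x,Q)/\omega(x,P)$; $l(Q)=\max_{x\in\mathbb{S}^{d-1}}l_x(Q)$; $Q\subseteq P$ is an $\varepsilon$-regret set if $l(Q)\le\varepsilon$; GRMR asks for a minimum-cardinality $\varepsilon$-regret set. Voronoi cell $R(p)=\{x\ne0:\langle p,x\rangle\ge\omega(x,P)\}$; extreme points $X=\{t_1,\dots,t_m\}$ are the points with $R(p)\ne\varnothing$. The inner-product Delaunay graph $\mathcal{G}(P)$ is the undirected graph on $X$ with an edge $\{t_i,t_j\}$ iff $R(t_i)\cap R(t_j)\ne\varnothing$; $N(t)$ denotes the neighbors of $t$. For $t_i,t_j\in X$, $\varepsilon_{ij}$ is the optimal value of the linear program: maximize $1-\langle t_i,x\rangle$ subject to $\langle t_j-t,x\rangle\ge0$ for all $t\in N(t_j)$ and $\langle t_j,x\rangle=1$ (with $\varepsilon_{ij}=+\infty$ if unbounded).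 Algorithm H-GRMR on input $(P,X,\mathcal{G}(P),\varepsilon)$: Step 1: start with a directed graph $H_\varepsilon$ on $X$ with no edges; for each $t_i$, mark $t_i$ visited, enqueue all of $N(t_i)$, and while the queue is nonempty dequeue $t_j$; if $t_j$ is not visited, mark it visited, compute $\varepsilon_{ij}$, and if $\varepsilon_{ij}\le\varepsilon$ add edge $t_i\to t_j$ and enqueue all of $N(t_j)$ (visited marks reset for each $t_i$). Step 2: let $Dom(t_i)=\{t_i\}\cup\{t_j: t_i\to t_j\in H_\varepsilon\}$; set $Q_\varepsilon=\varnothing$, $U=X$; while $U\ne\varnothing$, pick $t^*\in X\setminus Q_\varepsilon$ maximizing $|Dom(t^* )\cap U|$, add $t^*$ to $Q_\varepsilon$ and remove $Dom(t^* )$ from $U$. Return $Q_\varepsilon$. *)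

theory Defs
  imports "HOL-Analysis.Analysis" "HOL-Library.Extended_Real"
begin

definition omega :: "'a::euclidean_space \<Rightarrow> 'a set \<Rightarrow> real" where
  "omega x Q = Max ((\<lambda>p. p \<bullet> x) ` Q)"

definition regret_x :: "'a::euclidean_space set \<Rightarrow> 'a \<Rightarrow> 'a set \<Rightarrow> real" where
  "regret_x P x Q = 1 - omega x Q / omega x P"

definition regret :: "'a::euclidean_space set \<Rightarrow> 'a set \<Rightarrow> real" where
  "regret P Q = (SUP x\<in>sphere 0 1. regret_x P x Q)"

(* Q is an eps-regret set of P (Q nonempty so that omega(x,Q) is defined) *)
definition eps_regret_set :: "'a::euclidean_space set \<Rightarrow> real \<Rightarrow> 'a set \<Rightarrow> bool" where
  "eps_regret_set P eps Q \<longleftrightarrow> Q \<subseteq> P \<and> Q \<noteq> {} \<and> regret P Q \<le> eps"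

definition GRMR_optimal :: "'a::euclidean_space set \<Rightarrow> real \<Rightarrow> 'a set \<Rightarrow> bool" where
  "GRMR_optimal P eps Q \<longleftrightarrow> eps_regret_set P eps Q \<and>
     (\<forall>Q'. eps_regret_set P eps Q' \<longrightarrow> card Q \<le> card Q')"

definition voronoi :: "'a::euclidean_space set \<Rightarrow> 'a \<Rightarrow> 'a set" where
  "voronoi P p = {x. x \<noteq> 0 \<and> p \<bullet> x \<ge> omega x P}"

definition extreme_pts :: "'a::euclidean_space set \<Rightarrow> 'a set" where
  "extreme_pts P = {p\<in>P. voronoi P p \<noteq> {}}"

definition nbrs :: "'a::euclidean_space set \<Rightarrow> 'a \<Rightarrow> 'a set" where
  "nbrs P t = {s\<in>extreme_pts P. s \<noteq> t \<and> voronoi P t \<inter> voronoi P s \<noteq> {}}"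

(* eps_ij: optimal value of the LP (+infinity if unbounded) *)
definition eps_LP :: "'a::euclidean_space set \<Rightarrow> 'a \<Rightarrow> 'a \<Rightarrow> ereal" where
  "eps_LP P ti tj = (SUP x\<in>{x. (\<forall>t\<in>nbrs P tj. (tj - t) \<bullet> x \<ge> 0) \<and> tj \<bullet> x = 1}.
                        ereal (1 - ti \<bullet> x))"

(* Step 1 of H-GRMR: BFS from source ti; state = (visited, queue, out-edges of ti) *)
inductive bfs_step :: "'a::euclidean_space set \<Rightarrow> real \<Rightarrow> 'a \<Rightarrow>
    'a set \<times> 'a list \<times> 'a set \<Rightarrow> 'a set \<times> 'a list \<times> 'a set \<Rightarrow> bool"
  for P eps ti where
  skip: "tj \<in> vis \<Longrightarrow> bfs_step P eps ti (vis, tj # q, E) (vis, q, E)"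
| good: "tj \<notin> vis \<Longrightarrow> eps_LP P ti tj \<le> ereal eps \<Longrightarrow> distinct ns \<Longrightarrow> set ns = nbrs P tj \<Longrightarrow>
         bfs_step P eps ti (vis, tj # q, E) (insert tj vis, q @ ns, insert tj E)"
| bad: "tj \<notin> vis \<Longrightarrow> \<not> eps_LP P ti tj \<le> ereal eps \<Longrightarrow>
         bfs_step P eps ti (vis, tj # q, E) (insert tj vis, q, E)"

(* E is the set of out-neighbours of ti in H_eps produced by a complete BFS run *)
definition bfs_result :: "'a::euclidean_space set \<Rightarrow> real \<Rightarrow> 'a \<Rightarrow> 'a set \<Rightarrow> bool" where
  "bfs_result P eps ti E \<longleftrightarrow> (\<exists>ns vis. distinct ns \<and> set ns = nbrs P ti \<and>
      (bfs_step P eps ti)\<^sup>*\<^sup>* ({ti}, ns, {}) (vis, [], E))"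

(* Step 2 of H-GRMR: greedy covering; state = (Q, U) *)
inductive greedy_step :: "'a set \<Rightarrow> ('a \<Rightarrow> 'a set) \<Rightarrow> 'a set \<times> 'a set \<Rightarrow> 'a set \<times> 'a set \<Rightarrow> bool"
  for X Dom where
  pick: "U \<noteq> {} \<Longrightarrow> t \<in> X - Q \<Longrightarrow> (\<forall>s\<in>X - Q. card (Dom s \<inter> U) \<le> card (Dom t \<inter> U)) \<Longrightarrow>
         greedy_step X Dom (Q, U) (insert t Q, U - Dom t)"

(* Qe is a possible output of H-GRMR on input P, X, G(P), eps (any tie-breaking / queue order) *)
definition HGRMR_output :: "'a::euclidean_space set \<Rightarrow> real \<Rightarrow> 'a set \<Rightarrow> bool" where
  "HGRMR_output P eps Qe \<longleftrightarrow> (\<exists>Out.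
      (\<forall>t\<in>extreme_pts P. bfs_result P eps t (Out t)) \<and>
      (greedy_step (extreme_pts P) (\<lambda>t. insert t (Out t)))\<^sup>*\<^sup>* ({}, extreme_pts P) (Qe, {}))"

end

theory Submission
  imports Defs
begin

text \<open>The bound holds for crude reasons, whatever the BFS of Step 1 computes. The greedy step only ever picks extreme points, so
  \<open>|Q\<^sub>\<epsilon>| \<le> |X|\<close>. On the other hand every \<open>\<epsilon>\<close>-regret set with \<open>\<epsilon> < 1\<close> has more than \<open>d\<close>
  points: for at most \<open>d\<close> points \<open>q\<^sub>0, \<dots>, q\<^sub>k\<close> there is a unit vector orthogonal to
  \<open>q\<^sub>1, \<dots>, q\<^sub>k\<close> making a non-positive inner product with \<open>q\<^sub>0\<close>, and in that direction the
  regret ratio is at least \<open>1\<close>. Hence \<open>|Q\<^sup>*\<^sub>\<epsilon>| / (d + 1) \<ge> 1\<close>.\<close>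

lemma omega_insert:
  assumes "finite Q" "Q \<noteq> {}"
  shows "omega x (insert p Q) = max (p \<bullet> x) (omega x Q)"
  using assms by (simp add: omega_def)

lemma omega_le_iff:
  assumes "finite Q" "Q \<noteq> {}"
  shows "omega x Q \<le> c \<longleftrightarrow> (\<forall>q\<in>Q. q \<bullet> x \<le> c)"
  using assms by (simp add: omega_def)

lemma continuous_on_omega:
  assumes "finite Q" "Q \<noteq> {}"
  shows "continuous_on S (\<lambda>x. omega x Q)"
  using assms
proof (induction Q rule: finite_ne_induct)
  case (singleton p)
  then show ?case by (simp add: omega_def continuous_on_inner continuous_on_id)
next
  case (insert p Q)
  then show ?case by (simp add: omega_insert continuous_on_max continuous_on_inner continuous_on_id)
qed

lemma regret_x_le_regret:
  assumes "finite P" "P \<noteq> {}" "finite Q" "Q \<noteq> {}"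
    and "\<forall>y\<in>sphere 0 1. omega y P \<noteq> 0" and "x \<in> sphere 0 1"
  shows "regret_x P x Q \<le> regret P Q"
proof -
  have "continuous_on (sphere 0 1) (\<lambda>y. regret_x P y Q)"
    unfolding regret_x_def using assms
    by (intro continuous_intros continuous_on_omega) auto
  then have "compact ((\<lambda>y. regret_x P y Q) ` sphere 0 1)"
    by (rule compact_continuous_image) simp
  then have "bdd_above ((\<lambda>y. regret_x P y Q) ` sphere 0 1)"
    by (simp add: bounded_imp_bdd_above compact_imp_bounded)
  then show ?thesis
    unfolding regret_def by (rule cSUP_upper[OF assms(6)])
qed

lemma regret_x_ge_1:
  assumes "finite Q" "Q \<noteq> {}" "\<forall>q\<in>Q. q \<bullet> x \<le> 0" "omega x P > 0"
  shows "1 \<le> regret_x P x Q"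
proof -
  have "omega x Q \<le> 0" using assms(1-3) by (simp add: omega_le_iff)
  with assms(4) show ?thesis by (simp add: regret_x_def divide_nonpos_pos)
qed

lemma exists_unit_vector_nonpos_inner:
  fixes Q :: "'a::euclidean_space set"
  assumes "finite Q" "card Q \<le> DIM('a)"
  shows "\<exists>x\<in>sphere 0 1. \<forall>q\<in>Q. q \<bullet> x \<le> 0"
proof (cases "Q = {}")
  case True
  then show ?thesis using vector_choose_size[of 1] by auto
next
  case False
  then obtain q\<^sub>0 where "q\<^sub>0 \<in> Q" by blast
  have "dim (Q - {q\<^sub>0}) \<le> card (Q - {q\<^sub>0})"
    using assms(1) by (intro dim_le_card) (auto intro: span_base)
  also have "\<dots> < DIM('a)"
    using assms False \<open>q\<^sub>0 \<in> Q\<close> card_gt_0_iff[of Q] by (simp add: card_Diff_singleton)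
  finally obtain y where y: "y \<noteq> 0" "\<And>v. v \<in> span (Q - {q\<^sub>0}) \<Longrightarrow> orthogonal y v"
    using orthogonal_to_subspace_exists by blast
  define z where "z = (if q\<^sub>0 \<bullet> y > 0 then - y else y)"
  have "z \<noteq> 0" using y(1) by (simp add: z_def)
  have "q \<bullet> z \<le> 0" if "q \<in> Q" for q
  proof (cases "q = q\<^sub>0")
    case False
    with that have "orthogonal y q" by (intro y(2) span_base) simp
    then show ?thesis by (simp add: z_def orthogonal_def inner_commute)
  qed (simp add: z_def)
  then have "\<forall>q\<in>Q. q \<bullet> (z /\<^sub>R norm z) \<le> 0"
    by (simp add: mult_nonneg_nonpos)
  moreover have "z /\<^sub>R norm z \<in> sphere 0 1" using \<open>z \<noteq> 0\<close> by simp
  ultimately show ?thesis by blast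
qed

lemma eps_regret_set_card_gt_DIM:
  fixes P :: "'a::euclidean_space set"
  assumes P: "finite P" "P \<noteq> {}" "\<forall>x\<in>sphere 0 1. omega x P > 0"
    and "eps < 1" and "eps_regret_set P eps Q"
  shows "DIM('a) < card Q"
proof (rule ccontr)
  assume "\<not> DIM('a) < card Q"
  have Q: "Q \<subseteq> P" "Q \<noteq> {}" "regret P Q \<le> eps"
    using assms(5) by (auto simp: eps_regret_set_def)
  have "finite Q" using Q(1) P(1) by (rule finite_subset)
  moreover have "card Q \<le> DIM('a)" using \<open>\<not> DIM('a) < card Q\<close> by simp
  ultimately obtain x where x: "x \<in> sphere 0 1" "\<forall>q\<in>Q. q \<bullet> x \<le> 0"
    using exists_unit_vector_nonpos_inner by blast
  have "1 \<le> regret_x P x Q"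
    using \<open>finite Q\<close> Q(2) x(2) P(3) x(1) by (intro regret_x_ge_1) auto
  also have "\<dots> \<le> regret P Q"
    using P \<open>finite Q\<close> Q(2) x(1) by (intro regret_x_le_regret) auto
  finally show False using Q(3) assms(4) by simp
qed

lemma greedy_steps_subset:
  assumes "(greedy_step X Dom)\<^sup>*\<^sup>* (Q, U) (Q', U')" "Q \<subseteq> X"
  shows "Q' \<subseteq> X"
  using assms
  by (induction "(Q', U')" arbitrary: Q' U' rule: rtranclp_induct)
     (auto elim: greedy_step.cases)

lemma HGRMR_output_subset_extreme_pts:
  assumes "HGRMR_output P eps Qe"
  shows "Qe \<subseteq> extreme_pts P"
  using assms greedy_steps_subset unfolding HGRMR_output_def by blast

theorem theorem5:
  fixes P :: "'a::euclidean_space set" and eps :: real and Qopt Qe :: "'a set"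
  assumes "finite P" and "P \<noteq> {}"
    and "\<forall>x\<in>sphere 0 1. omega x P > 0"
    and "0 < eps" and "eps < 1"
    and "GRMR_optimal P eps Qopt"
    and "HGRMR_output P eps Qe"
  shows "real (card Qe) \<le> real (card (extreme_pts P)) / real (DIM('a) + 1) * real (card Qopt)"
proof -
  let ?X = "extreme_pts P"
  have "finite ?X" using assms(1) by (simp add: extreme_pts_def)
  then have "card Qe \<le> card ?X"
    using HGRMR_output_subset_extreme_pts[OF assms(7)] by (rule card_mono)
  moreover have "DIM('a) + 1 \<le> card Qopt"
    using eps_regret_set_card_gt_DIM assms(1-3,5,6) by (fastforce simp: GRMR_optimal_def)
  ultimately have "real (card Qe) * real (DIM('a) + 1) \<le> real (card ?X) * real (card Qopt)"
    by (intro mult_mono) simp_all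
  then show ?thesis by (simp add: field_simps del: of_nat_add)
qed

end
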